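(* Assume the following about $\phi^{\mathrm{AI}}(K;0)=h^{\mathrm{AI}}(K;0)/K$: it is continuous on $(0,\infty)$; $\phi^{\mathrm{AI}}(K;0)<\lambda$ for all sufficiently small $K>0$; there is $\hat K>0$ with $\phi^{\mathrm{AI}}(\hat K;0)>\lambda$; and $\phi^{\mathrm{AI}}(K;0)<\lambda$ for all sufficiently large $K$ (these hold under the hypotheses $C(0)>\beta\Delta+u$, existence of such $\hat K$, $\lim_{K\to\infty}w^{\mathrm{AI}}(\underline\alpha,K;\pi)=\infty$, and continuity of $\phi^{\mathrm{AI}}(\cdot;0)$). Let $K_U^{\mathrm{AI}}>0$ be the smallest positive $K$ with $\phi^{\mathrm{AI}}(K;0)=\lambda$ (the unstable threshold steady state). Suppose $a_H^{\mathrm{AI}}(K)$ is continuous on $(0,\infty)$, strictly positive for all $K>0$, and that $a_H^{\mathrm{AI}}(K)/K$ is bounded below by a positive constant for all sufficiently small $K>0$. Then: (i) for every $\eta>0$, $\phi^{\mathrm{AI}}(K;\eta)>\phi^{\mathrm{AI}}(K;0)$ for all $K>0$; (ii) the number $$\bar\eta=\sup_{K\in(0,K_U^{\mathrm{AI}}]}\frac{[\lambda-\phi^{\mathrm{AI}}(K;0)]_+}{\Delta(1-\pi)\,a_H^{\mathrm{AI}}(K)/K}$$ satisfies $\bar\eta>0$ and, for all $\eta>\bar\eta$, $\phi^{\mathrm{AI}}(K;\eta)>\lambda$ for all $K\in(0,K_U^{\mathrm{AI}}]$ (the low-archive basin is eliminated); in particular if $\bar\eta\le1$ this is achieved by some $\eta\in[0,1]$,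 while if $\bar\eta>1$ then even $\eta=1$ does not achieve it; (iii) $\bar\eta$ is weakly decreasing under pointwise increases of $a_H^{\mathrm{AI}}(K)/K$ on $(0,K_U^{\mathrm{AI}}]$.
   Context: Model: archive stock $K\ge0$ depreciating at rate $\lambda\in(0,1)$; routine-task share $\pi\in(0,1)$; knowledge increment $\Delta>0$; parameters $\beta,u\ge0$; cost shifter $C(K)$; outside option $w^{\mathrm{AI}}(\alpha,K;\pi)$ with lowest ability $\underline\alpha$. In the AI environment, for each $K$ the period equilibrium gives a posted flow of knowledge-enhancing queries $q_H^{\mathrm{AI}}(K)\ge0$, resolution probability $\sigma^{\mathrm{AI}}(K)\in[0,1]$, and private-resolution probability of knowledge-enhancing queries $a_H^{\mathrm{AI}}(K)\in[0,1]$. With conversion rate $\eta\in[0,1]$ (probability that a privately resolved knowledge-enhancing query is publicly logged), knowledge creation is $h^{\mathrm{AI}}(K;\eta)=\Delta(1-\pi)[q_H^{\mathrm{AI}}(K)\sigma^{\mathrm{AI}}(K)+\eta a_H^{\mathrm{AI}}(K)]$ and average creation is $\phi^{\mathrm{AI}}(K;\eta)=h^{\mathrm{AI}}(K;\eta)/K$, so $\phi^{\mathrm{AI}}(K;\eta)=\phi^{\mathrm{AI}}(K;0)+\Delta(1-\pi)\eta\,a_H^{\mathrm{AI}}(K)/K$. $[x]_+=\max\{x,0\}$. *)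

theory Defs
  imports "HOL-Analysis.Analysis"
begin

definition h_AI :: "real \<Rightarrow> real \<Rightarrow> (real \<Rightarrow> real) \<Rightarrow> (real \<Rightarrow> real) \<Rightarrow> (real \<Rightarrow> real)
                     \<Rightarrow> real \<Rightarrow> real \<Rightarrow> real" where
  "h_AI Delta p qH sig aH K eta = Delta * (1 - p) * (qH K * sig K + eta * aH K)"

definition phi_AI :: "real \<Rightarrow> real \<Rightarrow> (real \<Rightarrow> real) \<Rightarrow> (real \<Rightarrow> real) \<Rightarrow> (real \<Rightarrow> real)
                     \<Rightarrow> real \<Rightarrow> real \<Rightarrow> real" where
  "phi_AI Delta p qH sig aH K eta = h_AI Delta p qH sig aH K eta / K"

definition eta_bar :: "real \<Rightarrow> real \<Rightarrow> real \<Rightarrow> (real \<Rightarrow> real) \<Rightarrow> (real \<Rightarrow> real) \<Rightarrow> real \<Rightarrow> real" where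
  "eta_bar Delta p lam phi0 aH KU =
     Sup ((\<lambda>K. max (lam - phi0 K) 0 / (Delta * (1 - p) * aH K / K)) ` {0<..KU})"

end

theory Submission
  imports Defs
begin

text \<open>Raising the conversion rate eta shifts average creation up linearly:
  phi(K;eta) = phi(K;0) + eta w(K) with slope w(K) = Delta (1 - pi) aH(K)/K > 0.  Hence a stock
  K is lifted above lambda exactly when eta exceeds the boost [lambda - phi(K;0)]+ / w(K) it
  requires, and eta_bar, the supremum of these boosts over (0, KU], is the threshold.  It is
  finite because the numerators are at most lambda (phi is nonnegative) while aH(K)/K is bounded
  away from 0 on (0, KU]: near 0 by assumption, elsewhere by continuity on a compact interval.
  It is positive because phi(K;0) < lambda for small K.  Beyond nonnegativity, this is all that
  is used about phi(.;0): the remaining hypotheses on it and on KU only make KU the unstable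
  steady state.\<close>

definition eta_slope :: "real \<Rightarrow> real \<Rightarrow> (real \<Rightarrow> real) \<Rightarrow> real \<Rightarrow> real" where
  "eta_slope Delta p aH K = Delta * (1 - p) * aH K / K"

definition required_boost :: "real \<Rightarrow> (real \<Rightarrow> real) \<Rightarrow> (real \<Rightarrow> real) \<Rightarrow> real \<Rightarrow> real" where
  "required_boost lam phi w K = max (lam - phi K) 0 / w K"

lemma phi_AI_eta:
  "phi_AI Delta p qH sig aH K eta = phi_AI Delta p qH sig aH K 0 + eta * eta_slope Delta p aH K"
  by (simp add: phi_AI_def h_AI_def eta_slope_def distrib_left add_divide_distrib)

lemma phi_AI_zero_nonneg:
  assumes "Delta > 0" "p < 1" "K > 0" "qH K \<ge> 0" "sig K \<ge> 0"
  shows "phi_AI Delta p qH sig aH K 0 \<ge> 0"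
  using assms by (simp add: phi_AI_def h_AI_def)

lemma eta_bar_eq_SUP_required_boost:
  "eta_bar Delta p lam phi aH KU = (SUP K\<in>{0<..KU}. required_boost lam phi (eta_slope Delta p aH) K)"
  by (simp add: eta_bar_def required_boost_def eta_slope_def)

lemma eta_slope_pos:
  assumes "Delta > 0" "p < 1" "K > 0" "aH K > 0"
  shows "eta_slope Delta p aH K > 0"
  using assms by (simp add: eta_slope_def)

lemma eta_slope_lower_bound:
  assumes "Delta > 0" "p < 1" "x \<le> aH K / K"
  shows "Delta * (1 - p) * x \<le> eta_slope Delta p aH K"
  using mult_left_mono[OF assms(3), of "Delta * (1 - p)"] assms by (simp add: eta_slope_def)

lemma eta_slope_mono:
  assumes "Delta > 0" "p < 1" "aH K / K \<le> aH2 K / K"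
  shows "eta_slope Delta p aH K \<le> eta_slope Delta p aH2 K"
  using mult_left_mono[OF assms(3), of "Delta * (1 - p)"] assms by (simp add: eta_slope_def)

lemma less_add_boost_iff_required_boost_less:
  assumes "w K > 0" "eta > 0"
  shows "lam < phi K + eta * w K \<longleftrightarrow> required_boost lam phi w K < eta"
proof (cases "phi K < lam")
  case True
  then show ?thesis
    using assms by (simp add: required_boost_def pos_divide_less_eq algebra_simps)
next
  case False
  moreover have "eta * w K > 0"
    using assms by simp
  ultimately have "lam < phi K + eta * w K"
    by linarith
  then show ?thesis
    using assms False by (simp add: required_boost_def)
qed

lemma required_boost_antimono:
  assumes "w K > 0" "w K \<le> w2 K"
  shows "required_boost lam phi w2 K \<le> required_boost lam phi w K"
  using assms by (simp add: required_boost_def frac_le)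

lemma required_boost_le:
  assumes "lam \<ge> 0" "phi K \<ge> 0" "B > 0" "B \<le> w K"
  shows "required_boost lam phi w K \<le> lam / B"
proof -
  have "required_boost lam phi w K \<le> lam / w K"
    using assms by (simp add: required_boost_def divide_right_mono)
  also have "\<dots> \<le> lam / B"
    using assms by (simp add: frac_le)
  finally show ?thesis .
qed

lemma continuous_pos_bounded_below_Ioc:
  fixes h :: "real \<Rightarrow> real"
  assumes cont: "continuous_on {0<..b} h"
    and pos: "\<And>x. x \<in> {0<..b} \<Longrightarrow> h x > 0"
    and near_zero: "\<exists>c>0. \<exists>e>0. \<forall>x. 0 < x \<and> x < e \<longrightarrow> c \<le> h x"
  shows "\<exists>B>0. \<forall>x\<in>{0<..b}. B \<le> h x"
proof -
  obtain c e where "c > 0" "e > 0" and c_le: "\<And>x. 0 < x \<Longrightarrow> x < e \<Longrightarrow> c \<le> h x"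
    using near_zero by blast
  show ?thesis
  proof (cases "b > 0")
    case True
    let ?S = "{min e b..b}"
    have "?S \<subseteq> {0<..b}"
      using \<open>e > 0\<close> True by auto
    then obtain x0 where x0: "x0 \<in> ?S" and min: "\<And>y. y \<in> ?S \<Longrightarrow> h x0 \<le> h y"
      using continuous_attains_inf[of ?S h] continuous_on_subset[OF cont] True by force
    have "h x0 > 0"
      using x0 \<open>?S \<subseteq> {0<..b}\<close> pos by blast
    moreover have "min c (h x0) \<le> h x" if "x \<in> {0<..b}" for x
      using that c_le min[of x] by (cases "x < e") (auto simp: min_le_iff_disj)
    ultimately show ?thesis
      using \<open>c > 0\<close> by (intro exI[of _ "min c (h x0)"]) auto
  qed (use \<open>c > 0\<close> in auto)
qed

lemma bdd_above_required_boost_eta_slope: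
  assumes "Delta > 0" "p < 1" "lam \<ge> 0"
    and phi_nonneg: "\<And>K. K \<in> {0<..b} \<Longrightarrow> phi K \<ge> 0"
    and aH_cont: "continuous_on {0<..} aH"
    and aH_pos: "\<And>K. K > 0 \<Longrightarrow> aH K > 0"
    and aH_small: "\<exists>c>0. \<exists>e>0. \<forall>K. 0 < K \<and> K < e \<longrightarrow> aH K / K \<ge> c"
  shows "bdd_above (required_boost lam phi (eta_slope Delta p aH) ` {0<..b})"
proof -
  have "continuous_on {0<..b} (\<lambda>K. aH K / K)"
    by (intro continuous_intros continuous_on_subset[OF aH_cont]) auto
  then obtain B where "B > 0" and B_le: "\<forall>K\<in>{0<..b}. B \<le> aH K / K"
    using continuous_pos_bounded_below_Ioc[of b "\<lambda>K. aH K / K"] aH_pos aH_small by force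
  have "required_boost lam phi (eta_slope Delta p aH) K \<le> lam / (Delta * (1 - p) * B)"
    if "K \<in> {0<..b}" for K
  proof (rule required_boost_le)
    show "Delta * (1 - p) * B \<le> eta_slope Delta p aH K"
      using that B_le assms(1,2) by (intro eta_slope_lower_bound) auto
  qed (use that phi_nonneg \<open>B > 0\<close> assms(1-3) in auto)
  then show ?thesis
    by (rule bdd_aboveI2)
qed

lemma near_zero_imp_ex_Ioc:
  fixes b :: real
  assumes "\<exists>e>0. \<forall>x. 0 < x \<and> x < e \<longrightarrow> P x" "b > 0"
  shows "\<exists>x\<in>{0<..b}. P x"
proof -
  obtain e where "e > 0" "\<forall>x. 0 < x \<and> x < e \<longrightarrow> P x"
    using assms(1) by blast
  then show ?thesis
    using assms(2) by (intro bexI[of _ "min e b / 2"]) auto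
qed

context
  fixes lam :: real and phi w :: "real \<Rightarrow> real" and A :: "real set"
  assumes w_pos: "\<And>K. K \<in> A \<Longrightarrow> w K > 0"
begin

lemma SUP_required_boost_pos:
  assumes "bdd_above (required_boost lam phi w ` A)" "K \<in> A" "phi K < lam"
  shows "(SUP K\<in>A. required_boost lam phi w K) > 0"
proof -
  have "required_boost lam phi w K > 0"
    using assms w_pos by (simp add: required_boost_def)
  then show ?thesis
    using cSUP_upper[OF assms(2,1)] by linarith
qed

lemma above_SUP_required_boost:
  assumes "bdd_above (required_boost lam phi w ` A)" "(SUP K\<in>A. required_boost lam phi w K) \<ge> 0"
    and "eta > (SUP K\<in>A. required_boost lam phi w K)" "K \<in> A"
  shows "lam < phi K + eta * w K"
  using assms cSUP_upper[OF assms(4,1)] w_pos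
  by (subst less_add_boost_iff_required_boost_less) auto

lemma SUP_required_boost_le:
  assumes "A \<noteq> {}" "eta > 0" "\<And>K. K \<in> A \<Longrightarrow> lam < phi K + eta * w K"
  shows "(SUP K\<in>A. required_boost lam phi w K) \<le> eta"
  using assms w_pos less_add_boost_iff_required_boost_less
  by (intro cSUP_least) (auto intro: less_imp_le)

lemma SUP_required_boost_antimono:
  assumes "A \<noteq> {}" "bdd_above (required_boost lam phi w ` A)" "\<And>K. K \<in> A \<Longrightarrow> w K \<le> w2 K"
  shows "(SUP K\<in>A. required_boost lam phi w2 K) \<le> (SUP K\<in>A. required_boost lam phi w K)"
  using assms w_pos by (intro cSUP_mono) (auto intro!: bexI required_boost_antimono)

end

theorem proposition4:
  fixes Delta p lam KU :: real
    and qH sig aH :: "real \<Rightarrow> real"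
  defines "phi0 \<equiv> (\<lambda>K. phi_AI Delta p qH sig aH K 0)"
  assumes Delta_pos: "Delta > 0"
    and p_range: "0 < p" "p < 1"
    and lam_range: "0 < lam" "lam < 1"
    and qH_nonneg: "\<And>K. K \<ge> 0 \<Longrightarrow> qH K \<ge> 0"
    and sig_range: "\<And>K. K \<ge> 0 \<Longrightarrow> 0 \<le> sig K \<and> sig K \<le> 1"
    and aH_range: "\<And>K. K \<ge> 0 \<Longrightarrow> 0 \<le> aH K \<and> aH K \<le> 1"
    and phi0_cont: "continuous_on {0<..} phi0"
    and phi0_small: "\<exists>e>0. \<forall>K. 0 < K \<and> K < e \<longrightarrow> phi0 K < lam"
    and phi0_hat: "\<exists>Khat>0. phi0 Khat > lam"
    and phi0_large: "\<exists>M. \<forall>K\<ge>M. phi0 K < lam"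
    and KU_pos: "KU > 0"
    and KU_root: "phi0 KU = lam"
    and KU_least: "\<And>K. 0 < K \<Longrightarrow> K < KU \<Longrightarrow> phi0 K \<noteq> lam"
    and aH_cont: "continuous_on {0<..} aH"
    and aH_pos: "\<And>K. K > 0 \<Longrightarrow> aH K > 0"
    and aH_small: "\<exists>c>0. \<exists>e>0. \<forall>K. 0 < K \<and> K < e \<longrightarrow> aH K / K \<ge> c"
  shows
    "(\<forall>eta>0. \<forall>K>0. phi_AI Delta p qH sig aH K eta > phi0 K)
     \<and> eta_bar Delta p lam phi0 aH KU > 0
     \<and> (\<forall>eta > eta_bar Delta p lam phi0 aH KU.
           \<forall>K\<in>{0<..KU}. phi_AI Delta p qH sig aH K eta > lam)
     \<and> (eta_bar Delta p lam phi0 aH KU < 1 \<longrightarrow>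
           (\<exists>eta\<in>{0..1}. \<forall>K\<in>{0<..KU}. phi_AI Delta p qH sig aH K eta > lam))
     \<and> (eta_bar Delta p lam phi0 aH KU > 1 \<longrightarrow>
           \<not> (\<forall>K\<in>{0<..KU}. phi_AI Delta p qH sig aH K 1 > lam))
     \<and> (\<forall>aH2 :: real \<Rightarrow> real. (\<forall>K\<in>{0<..KU}. aH K / K \<le> aH2 K / K) \<longrightarrow>
           eta_bar Delta p lam phi0 aH2 KU \<le> eta_bar Delta p lam phi0 aH KU)"
proof -
  let ?A = "{0<..KU}" and ?w = "eta_slope Delta p aH"
  have w_pos: "?w K > 0" if "K > 0" for K
    using eta_slope_pos Delta_pos p_range aH_pos that by blast
  have phi_eta: "phi_AI Delta p qH sig aH K eta = phi0 K + eta * ?w K" for K eta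
    unfolding phi0_def by (rule phi_AI_eta)
  have eta_bar_SUP: "eta_bar Delta p lam phi0 aH KU = (SUP K\<in>?A. required_boost lam phi0 ?w K)"
    by (rule eta_bar_eq_SUP_required_boost)
  have bdd: "bdd_above (required_boost lam phi0 ?w ` ?A)"
    unfolding phi0_def
    using Delta_pos p_range lam_range qH_nonneg sig_range aH_cont aH_pos aH_small
    by (intro bdd_above_required_boost_eta_slope phi_AI_zero_nonneg) auto
  obtain K1 where "K1 \<in> ?A" "phi0 K1 < lam"
    using near_zero_imp_ex_Ioc[OF phi0_small KU_pos] by blast
  then have eta_bar_pos: "eta_bar Delta p lam phi0 aH KU > 0"
    unfolding eta_bar_SUP using w_pos bdd by (intro SUP_required_boost_pos) auto
  have lift: "phi_AI Delta p qH sig aH K eta > lam"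
    if "eta > eta_bar Delta p lam phi0 aH KU" "K \<in> ?A" for eta K
    using that eta_bar_pos w_pos bdd unfolding phi_eta eta_bar_SUP
    by (intro above_SUP_required_boost[where A = ?A and w = ?w]) auto
  have no_lift_at_1: "eta_bar Delta p lam phi0 aH KU \<le> 1"
    if "\<forall>K\<in>?A. phi_AI Delta p qH sig aH K 1 > lam"
    using that w_pos KU_pos unfolding phi_eta eta_bar_SUP
    by (intro SUP_required_boost_le[where A = ?A and w = ?w]) auto
  have antimono: "eta_bar Delta p lam phi0 aH2 KU \<le> eta_bar Delta p lam phi0 aH KU"
    if "\<forall>K\<in>?A. aH K / K \<le> aH2 K / K" for aH2
    using that w_pos bdd KU_pos Delta_pos p_range unfolding eta_bar_eq_SUP_required_boost
    by (intro SUP_required_boost_antimono[where A = ?A and w = ?w] eta_slope_mono) auto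
  have raise: "phi_AI Delta p qH sig aH K eta > phi0 K" if "eta > 0" "K > 0" for eta K
    using that w_pos[of K] by (simp add: phi_eta)
  show ?thesis
  proof (intro conjI impI)
    show "\<exists>eta\<in>{0..1}. \<forall>K\<in>?A. phi_AI Delta p qH sig aH K eta > lam"
      if "eta_bar Delta p lam phi0 aH KU < 1"
      using lift that by (intro bexI[of _ 1]) auto
  qed (use raise eta_bar_pos lift no_lift_at_1 antimono in auto)
qed

end
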